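(* Let $\sigma,\tau\in\mathcal T$, let $(w_n),(x_n)$ be defining sequences for $\sigma$ and $(y_n),(z_n)$ defining sequences for $\tau$. Then (i) for every $\alpha\in\mathbb Q$ the limits $\lim_n\overline{\alpha w_n}$ and $\lim_n\overline{\alpha x_n}$ exist in $\mathbb R^{\mathbb Q\times\Delta}$ and are equal; (ii) the iterated limits $\lim_n\lim_m\overline{w_n+y_m}$ and $\lim_n\lim_m\overline{x_n+z_m}$ exist and are equal.
   Context: Standing setting: $(X,\|\cdot\|)$ is a separable infinite-dimensional Banach space and $d$ is a translation-invariant ($d(x,y)=d(x-y,0)$) stable pseudometric on $X$ such that $\mathrm{Id}\colon(X,\|\cdot\|)\to(X,d)$ is a coarse equivalence ($\omega_{\mathrm{Id}}(t)=\sup\{d(x,y):\|x-y\|\le t\}<\infty$ for all $t$, $\rho_{\mathrm{Id}}(t)=\inf\{d(x,y):\|x-y\|\ge t\}\to\infty$). Stability: $\lim_{i,\mathcal U}\lim_{j,\mathcal V}d(x_i,y_j)=\lim_{j,\mathcal V}\lim_{i,\mathcal U}d(x_i,y_j)$ for bounded sequences and nonprincipal ultrafilters on $\mathbb N$. $\Delta$ is a countable $\|\cdot\|$-dense $\mathbb Q$-linear subspace of $X$; for $x\in\Delta$, $\bar x(\lambda,y)=d(\lambda x,y)$ for $(\lambda,y)\in\mathbb Q\times\Delta$. $\mathcal T$ is the closure of $\{\bar x:x\in\Delta\}$ in $\mathbb R^{\mathbb Q\times\Delta}$ (pointwise topology). A defining sequence for $\sigma\in\mathcal T$ is a sequence $(x_n)$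 in $\Delta$ with $\bar x_n\to\sigma$ pointwise. *)

theory Defs
  imports "HOL-Analysis.Analysis"
begin

definition pseudometric :: "('a \<Rightarrow> 'a \<Rightarrow> real) \<Rightarrow> bool" where
  "pseudometric d \<longleftrightarrow> (\<forall>x. d x x = 0) \<and> (\<forall>x y. d x y = d y x)
     \<and> (\<forall>x y z. d x z \<le> d x y + d y z)"

definition translation_invariant :: "('a::real_normed_vector \<Rightarrow> 'a \<Rightarrow> real) \<Rightarrow> bool" where
  "translation_invariant d \<longleftrightarrow> (\<forall>x y. d x y = d (x - y) 0)"

text \<open>Id : (X, norm) \<rightarrow> (X, d) is a coarse equivalence: the expansion modulus
  omega(t) = sup{d x y : norm(x-y) \<le> t} is finite for all t and the compression modulus
  rho(t) = inf{d x y : norm(x-y) \<ge> t} tends to infinity.\<close>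
definition id_coarse_equivalence :: "('a::real_normed_vector \<Rightarrow> 'a \<Rightarrow> real) \<Rightarrow> bool" where
  "id_coarse_equivalence d \<longleftrightarrow>
     (\<forall>t. \<exists>M. \<forall>x y. norm (x - y) \<le> t \<longrightarrow> d x y \<le> M) \<and>
     (\<forall>M. \<exists>t. \<forall>x y. norm (x - y) \<ge> t \<longrightarrow> d x y \<ge> M)"

definition nonprincipal_ultrafilter :: "nat filter \<Rightarrow> bool" where
  "nonprincipal_ultrafilter U \<longleftrightarrow> U \<noteq> bot
     \<and> (\<forall>P. eventually P U \<or> eventually (\<lambda>n. \<not> P n) U)
     \<and> (\<forall>k. eventually (\<lambda>n. n \<noteq> k) U)"

definition stable :: "('a::real_normed_vector \<Rightarrow> 'a \<Rightarrow> real) \<Rightarrow> bool" where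
  "stable d \<longleftrightarrow> (\<forall>(x::nat \<Rightarrow> 'a) (y::nat \<Rightarrow> 'a) U V.
     bounded (range x) \<longrightarrow> bounded (range y) \<longrightarrow>
     nonprincipal_ultrafilter U \<longrightarrow> nonprincipal_ultrafilter V \<longrightarrow>
     Lim U (\<lambda>i. Lim V (\<lambda>j. d (x i) (y j))) = Lim V (\<lambda>j. Lim U (\<lambda>i. d (x i) (y j))))"

definition rat_linear_subspace :: "'a::real_vector set \<Rightarrow> bool" where
  "rat_linear_subspace D \<longleftrightarrow> 0 \<in> D \<and> (\<forall>x\<in>D. \<forall>y\<in>D. x + y \<in> D)
     \<and> (\<forall>q::rat. \<forall>x\<in>D. of_rat q *\<^sub>R x \<in> D)"

text \<open>The space R^(Q x Delta) with the product (pointwise) topology; elements are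
  extensional functions on UNIV x Delta.\<close>
definition PT :: "'a set \<Rightarrow> (rat \<times> 'a \<Rightarrow> real) topology" where
  "PT D = product_topology (\<lambda>_. euclideanreal) (UNIV \<times> D)"

definition xbar :: "('a::real_vector \<Rightarrow> 'a \<Rightarrow> real) \<Rightarrow> 'a set \<Rightarrow> 'a \<Rightarrow> (rat \<times> 'a \<Rightarrow> real)" where
  "xbar d D x = restrict (\<lambda>(q, y). d (of_rat q *\<^sub>R x) y) (UNIV \<times> D)"

definition Tspace :: "('a::real_vector \<Rightarrow> 'a \<Rightarrow> real) \<Rightarrow> 'a set \<Rightarrow> (rat \<times> 'a \<Rightarrow> real) set" where
  "Tspace d D = (PT D) closure_of (xbar d D ` D)"

definition defining_sequence ::
  "('a::real_vector \<Rightarrow> 'a \<Rightarrow> real) \<Rightarrow> 'a set \<Rightarrow> (rat \<times> 'a \<Rightarrow> real) \<Rightarrow> (nat \<Rightarrow> 'a) \<Rightarrow> bool" where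
  "defining_sequence d D \<sigma> x \<longleftrightarrow> (\<forall>n. x n \<in> D) \<and>
     limitin (PT D) (\<lambda>n. xbar d D (x n)) \<sigma> sequentially"

end

theory Submission
  imports Defs
begin

text \<open>
  Part (i) is coordinatewise: coordinate \<open>(q, u)\<close> of \<open>xbar (\<alpha> p\<^sub>n)\<close> is coordinate
  \<open>(q \<alpha>, u)\<close> of \<open>xbar p\<^sub>n\<close>, so its limit is read off \<open>\<sigma>\<close> alone.

  For (ii), translation invariance gives \<open>d (q (p\<^sub>n + r\<^sub>m)) u = d (q r\<^sub>m) (u - q p\<^sub>n)
  = d (q p\<^sub>n) (u - q r\<^sub>m)\<close>. Read as the middle term, the limit over \<open>m\<close> is
  \<open>\<tau> (q, u - q p\<^sub>n)\<close>; read as the last one, the limit over \<open>n\<close> for fixed \<open>m\<close> is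
  \<open>\<sigma> (q, u - q r\<^sub>m)\<close>. Stability exchanges the two iterated limits along nonprincipal
  ultrafilters, so every nonprincipal ultrafilter limit of the bounded sequence
  \<open>\<tau> (q, u - q p\<^sub>n)\<close> equals \<open>lim\<^sub>V \<sigma> (q, u - q s\<^sub>m)\<close>, for one fixed ultrafilter \<open>V\<close>
  and any defining sequence \<open>s\<close> of \<open>\<tau>\<close>; hence the sequence converges to that value,
  which depends only on \<open>\<sigma>\<close> and \<open>\<tau>\<close>.
\<close>

definition ultrafilter :: "'a filter \<Rightarrow> bool" where
  "ultrafilter U \<longleftrightarrow> U \<noteq> bot \<and> (\<forall>P. eventually P U \<or> eventually (\<lambda>x. \<not> P x) U)"

lemma ultrafilter_below:
  fixes F :: "'a filter"
  assumes "F \<noteq> bot"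
  shows "\<exists>U\<le>F. ultrafilter U"
proof -
  let ?A = "{G. G \<noteq> bot \<and> G \<le> F}"
  have "\<exists>M\<in>?A. \<forall>G\<in>?A. G \<le> M \<longrightarrow> G = M"
  proof (rule predicate_Zorn)
    show "partial_order_on ?A (relation_of (\<lambda>G H. H \<le> G) ?A)"
      unfolding partial_order_on_def preorder_on_def refl_on_def trans_on_def antisym_on_def
        relation_of_def by auto
    fix C assume C: "C \<in> Chains (relation_of (\<lambda>G H. H \<le> G) ?A)"
    show "\<exists>U\<in>?A. \<forall>G\<in>C. U \<le> G"
    proof (cases "C = {}")
      case True
      then show ?thesis using assms by blast
    next
      case False
      have C_A: "C \<subseteq> ?A" by (rule Chains_relation_of[OF C])
      have directed: "\<exists>H\<in>C. H \<le> inf G G'" if "G \<in> C" "G' \<in> C" for G G'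
      proof -
        from C that have "G \<le> G' \<or> G' \<le> G"
          unfolding Chains_def relation_of_def by blast
        with that show ?thesis by (metis inf.absorb1 inf.absorb2 order_refl)
      qed
      have "Inf C \<noteq> bot"
        using C_A by (auto simp: trivial_limit_def eventually_Inf_base[OF False directed])
      moreover obtain G where "G \<in> C" using False by blast
      then have "Inf C \<le> F" using C_A by (blast intro: Inf_lower2)
      ultimately show ?thesis by (blast intro: Inf_lower)
    qed
  qed
  then obtain M where "M \<in> ?A" and M_max: "\<forall>G\<in>?A. G \<le> M \<longrightarrow> G = M" ..
  then have M: "M \<noteq> bot" "M \<le> F" by simp_all
  have maximal: "G = M" if "G \<noteq> bot" "G \<le> M" for G
    using M_max that order.trans[OF that(2) M(2)] by blast
  have "eventually P M" if "\<not> eventually (\<lambda>x. \<not> P x) M" for P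
  proof -
    let ?G = "inf M (principal {x. P x})"
    have "?G \<noteq> bot"
      using that by (simp add: trivial_limit_def eventually_inf_principal not_eventually)
    then have "?G = M" by (rule maximal) simp
    moreover have "eventually P ?G" by (simp add: eventually_inf_principal)
    ultimately show ?thesis by simp
  qed
  then have "ultrafilter M" using M(1) unfolding ultrafilter_def by blast
  with M(2) show ?thesis by blast
qed

lemma nonprincipal_ultrafilter_iff:
  "nonprincipal_ultrafilter U \<longleftrightarrow> ultrafilter U \<and> U \<le> sequentially"
proof -
  have "(\<forall>k. eventually (\<lambda>n. n \<noteq> k) U) \<longleftrightarrow> U \<le> sequentially"
  proof
    assume cofinite: "\<forall>k. eventually (\<lambda>n. n \<noteq> k) U"
    show "U \<le> sequentially"
    proof (rule filter_leI)
      fix P assume "eventually P sequentially"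
      then obtain N where N: "\<And>n. n \<ge> N \<Longrightarrow> P n" by (auto simp: eventually_sequentially)
      have "eventually (\<lambda>n. \<forall>k\<in>{..<N}. n \<noteq> k) U"
        using cofinite by (intro eventually_ball_finite) auto
      then show "eventually P U"
        by (rule eventually_mono) (use N not_le in auto)
    qed
  next
    assume "U \<le> sequentially"
    moreover have "eventually (\<lambda>n. n \<noteq> k) sequentially" for k :: nat
      by (rule eventually_sequentiallyI[of "Suc k"]) simp
    ultimately show "\<forall>k. eventually (\<lambda>n. n \<noteq> k) U"
      using filter_leD by blast
  qed
  then show ?thesis
    unfolding nonprincipal_ultrafilter_def ultrafilter_def by blast
qed

lemma ultrafilter_tendsto_in_compact:
  fixes a :: "'b \<Rightarrow> 'c::topological_space"
  assumes U: "ultrafilter U" and K: "compact K" and in_K: "eventually (\<lambda>x. a x \<in> K) U"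
  shows "\<exists>c\<in>K. (a \<longlongrightarrow> c) U"
proof -
  let ?F = "filtermap a U"
  have "?F \<noteq> bot" using U by (simp add: ultrafilter_def filtermap_bot_iff)
  moreover have "eventually (\<lambda>y. y \<in> K) ?F" using in_K by (simp add: eventually_filtermap)
  ultimately obtain c where c: "c \<in> K" and cluster: "inf (nhds c) ?F \<noteq> bot"
    using K unfolding compact_filter by blast
  have "eventually P ?F" if P: "eventually P (nhds c)" for P
  proof (rule ccontr)
    assume "\<not> eventually P ?F"
    then have "eventually (\<lambda>x. \<not> P x) ?F"
      using U unfolding ultrafilter_def eventually_filtermap by auto
    with P have "eventually (\<lambda>_. False) (inf (nhds c) ?F)"
      unfolding eventually_inf by blast
    with cluster show False by (simp add: trivial_limit_def)
  qed
  then have "(a \<longlongrightarrow> c) U" unfolding filterlim_def le_filter_def by blast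
  with c show ?thesis by blast
qed

lemma Lim_nonprincipal_ultrafilter:
  fixes a :: "nat \<Rightarrow> 'b::t2_space"
  assumes "nonprincipal_ultrafilter U" and "a \<longlonglongrightarrow> c"
  shows "Lim U a = c"
  using assms by (intro tendsto_Lim tendsto_mono[of U sequentially])
    (auto simp: nonprincipal_ultrafilter_iff ultrafilter_def)

lemma tendsto_of_nonprincipal_ultrafilter_Lims:
  fixes a :: "nat \<Rightarrow> 'b::t2_space"
  assumes K: "compact K" "range a \<subseteq> K"
    and Lims: "\<And>U. nonprincipal_ultrafilter U \<Longrightarrow> Lim U a = c"
  shows "a \<longlonglongrightarrow> c"
proof (rule ccontr)
  assume "\<not> a \<longlonglongrightarrow> c"
  then obtain S where S: "open S" "c \<in> S" and "\<not> eventually (\<lambda>n. a n \<in> S) sequentially"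
    unfolding tendsto_def by blast
  then have "inf sequentially (principal {n. a n \<notin> S}) \<noteq> bot"
    by (simp add: trivial_limit_def eventually_inf_principal)
  then obtain U where U_le: "U \<le> inf sequentially (principal {n. a n \<notin> S})" and U: "ultrafilter U"
    using ultrafilter_below by blast
  then have nonprincipal: "nonprincipal_ultrafilter U"
    by (simp add: nonprincipal_ultrafilter_iff)
  have "eventually (\<lambda>n. a n \<in> K) U"
    using K(2) by (auto intro: always_eventually)
  then obtain c' where "(a \<longlongrightarrow> c') U"
    using ultrafilter_tendsto_in_compact[OF U K(1)] by blast
  moreover have "c' = c"
    using Lims[OF nonprincipal] tendsto_Lim[OF _ calculation] U by (simp add: ultrafilter_def)
  ultimately have "eventually (\<lambda>n. a n \<in> S) U" using S by (simp add: tendsto_def)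
  moreover have "eventually (\<lambda>n. a n \<notin> S) U"
    using U_le by (rule filter_leD) (simp add: eventually_inf_principal)
  ultimately have "eventually (\<lambda>_. False) U" by (rule eventually_elim2) simp
  with U show False by (simp add: ultrafilter_def trivial_limit_def)
qed

lemma tendsto_Lim_of_ultrafilter_exchange:
  fixes f :: "nat \<Rightarrow> nat \<Rightarrow> 'b::t2_space"
  assumes rows: "\<And>n. (\<lambda>m. f n m) \<longlonglongrightarrow> a n"
    and cols: "\<And>m. (\<lambda>n. f n m) \<longlonglongrightarrow> b m"
    and K: "compact K" "\<And>n m. f n m \<in> K"
    and V: "nonprincipal_ultrafilter V"
    and exchange: "\<And>U. nonprincipal_ultrafilter U \<Longrightarrow>
        Lim U (\<lambda>n. Lim V (\<lambda>m. f n m)) = Lim V (\<lambda>m. Lim U (\<lambda>n. f n m))"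
  shows "a \<longlonglongrightarrow> Lim V b"
proof (rule tendsto_of_nonprincipal_ultrafilter_Lims)
  show "compact K" by (fact K(1))
  show "range a \<subseteq> K"
  proof safe
    fix n
    show "a n \<in> K"
      using Lim_in_closed_set[OF compact_imp_closed[OF K(1)] _ sequentially_bot rows[of n]] K(2)
      by simp
  qed
  fix U assume U: "nonprincipal_ultrafilter U"
  show "Lim U a = Lim V b"
    using exchange[OF U] by (simp add: Lim_nonprincipal_ultrafilter[OF V rows]
        Lim_nonprincipal_ultrafilter[OF U cols])
qed

lemma xbar_apply: "u \<in> D \<Longrightarrow> xbar d D v (q, u) = d (of_rat q *\<^sub>R v) u"
  by (simp add: xbar_def)

lemma xbar_extensional: "xbar d D v \<in> extensional (UNIV \<times> D)"
  by (simp add: xbar_def)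

lemma limitin_PT_iff:
  assumes "\<And>n. g n \<in> extensional (UNIV \<times> D)"
  shows "limitin (PT D) g l sequentially \<longleftrightarrow>
    l \<in> extensional (UNIV \<times> D) \<and> (\<forall>q. \<forall>u\<in>D. (\<lambda>n. g n (q, u)) \<longlonglongrightarrow> l (q, u))"
  unfolding PT_def limitin_componentwise using assms by (auto simp: PiE_def)

lemma defining_sequenceD:
  assumes "defining_sequence d D \<sigma> p"
  shows "p n \<in> D"
    and "u \<in> D \<Longrightarrow> (\<lambda>n. d (of_rat q *\<^sub>R p n) u) \<longlonglongrightarrow> \<sigma> (q, u)"
  using assms by (auto simp: defining_sequence_def limitin_PT_iff xbar_extensional xbar_apply)

lemma rat_linear_subspace_diff_scaleR:
  assumes "rat_linear_subspace D" "u \<in> D" "v \<in> D"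
  shows "u - of_rat q *\<^sub>R v \<in> D"
proof -
  have "u + of_rat (- q) *\<^sub>R v \<in> D"
    using assms unfolding rat_linear_subspace_def by blast
  then show ?thesis by (simp add: of_rat_minus)
qed

lemma pseudometric_nonneg:
  assumes "pseudometric d"
  shows "d x y \<ge> 0"
proof -
  have "d x x = 0" "d x x \<le> d x y + d y x" "d y x = d x y"
    using assms unfolding pseudometric_def by blast+
  then show ?thesis by linarith
qed

lemma translation_invariant_add:
  fixes d :: "'a::real_normed_vector \<Rightarrow> 'a \<Rightarrow> real"
  assumes "translation_invariant d"
  shows "d (a + b) u = d a (u - b)"
  using assms unfolding translation_invariant_def by (metis add_diff_eq diff_diff_eq2)

lemma translation_invariant_swap:
  fixes d :: "'a::real_normed_vector \<Rightarrow> 'a \<Rightarrow> real"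
  assumes "translation_invariant d"
  shows "d a (u - b) = d b (u - a)"
  by (metis assms translation_invariant_add add.commute)

lemma defining_sequence_bounded:
  assumes "defining_sequence d D \<sigma> p" "0 \<in> D" "id_coarse_equivalence d"
  shows "bounded (range p)"
proof -
  have "(\<lambda>n. d (p n) 0) \<longlonglongrightarrow> \<sigma> (1, 0)"
    using defining_sequenceD(2)[OF assms(1,2), of 1] by simp
  then have "Bseq (\<lambda>n. d (p n) 0)" by (rule convergent_imp_Bseq[OF convergentI])
  then obtain K where "\<And>n. \<bar>d (p n) 0\<bar> \<le> K"
    by (auto simp: Bseq_def)
  then have K: "d (p n) 0 \<le> K" for n
    using abs_le_D1 by blast
  obtain t where t: "\<And>x y. norm (x - y) \<ge> t \<Longrightarrow> d x y \<ge> K + 1"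
    using assms(3) unfolding id_coarse_equivalence_def by blast
  have "norm (p n) \<le> t" for n
  proof (rule ccontr)
    assume "\<not> norm (p n) \<le> t"
    then have "d (p n) 0 \<ge> K + 1" using t[of "p n" 0] by simp
    with K[of n] show False by simp
  qed
  then show ?thesis unfolding bounded_iff by blast
qed

lemma limitin_scaleR_defining_sequence:
  assumes "defining_sequence d D \<sigma> p"
  shows "limitin (PT D) (\<lambda>n. xbar d D (of_rat \<alpha> *\<^sub>R p n))
           (restrict (\<lambda>(q, u). \<sigma> (q * \<alpha>, u)) (UNIV \<times> D)) sequentially"
proof -
  have "(\<lambda>n. d (of_rat q *\<^sub>R of_rat \<alpha> *\<^sub>R p n) u) \<longlonglongrightarrow> \<sigma> (q * \<alpha>, u)" if "u \<in> D" for q u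
    using defining_sequenceD(2)[OF assms that, of "q * \<alpha>"] by (simp add: of_rat_mult)
  then show ?thesis by (simp add: limitin_PT_iff xbar_extensional xbar_apply)
qed

lemma limitin_add_defining_sequence:
  fixes d :: "'a::real_normed_vector \<Rightarrow> 'a \<Rightarrow> real"
  assumes ti: "translation_invariant d" and D: "rat_linear_subspace D"
    and p: "defining_sequence d D \<sigma> p" and r: "defining_sequence d D \<tau> r"
  shows "limitin (PT D) (\<lambda>m. xbar d D (p n + r m))
           (restrict (\<lambda>(q, u). \<tau> (q, u - of_rat q *\<^sub>R p n)) (UNIV \<times> D)) sequentially"
proof -
  have "(\<lambda>m. d (of_rat q *\<^sub>R r m) (u - of_rat q *\<^sub>R p n)) \<longlonglongrightarrow> \<tau> (q, u - of_rat q *\<^sub>R p n)"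
    if "u \<in> D" for q u
    using defining_sequenceD(2)[OF r rat_linear_subspace_diff_scaleR[OF D that defining_sequenceD(1)[OF p]]] .
  then show ?thesis
    by (simp add: limitin_PT_iff xbar_extensional xbar_apply scaleR_add_right
        translation_invariant_add[OF ti] add.commute[of "of_rat _ *\<^sub>R p n"])
qed

lemma tendsto_shifted_defining_sequence:
  fixes d :: "'a::real_normed_vector \<Rightarrow> 'a \<Rightarrow> real"
  assumes pm: "pseudometric d" and ti: "translation_invariant d" and stab: "stable d"
    and ce: "id_coarse_equivalence d" and D: "rat_linear_subspace D"
    and p: "defining_sequence d D \<sigma> p" and r: "defining_sequence d D \<tau> r" and u: "u \<in> D"
    and V: "nonprincipal_ultrafilter V"
  shows "(\<lambda>n. \<tau> (q, u - of_rat q *\<^sub>R p n)) \<longlonglongrightarrow> Lim V (\<lambda>m. \<sigma> (q, u - of_rat q *\<^sub>R r m))"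
proof -
  define X where "X n = of_rat q *\<^sub>R p n" for n
  define Y where "Y m = u - of_rat q *\<^sub>R r m" for m
  have "0 \<in> D" using D by (simp add: rat_linear_subspace_def)
  then have "bounded (range p)" "bounded (range r)"
    using p r ce by (simp_all add: defining_sequence_bounded)
  then have bounded_X: "bounded (range X)" and bounded_Y: "bounded (range Y)"
    using bounded_scaling[of "range p" "of_rat q"]
      bounded_translation[OF bounded_scaling[of "range r" "- of_rat q"], of u]
    by (simp_all add: X_def Y_def image_image)
  then obtain Bx By where "\<And>n. norm (X n) \<le> Bx" "\<And>m. norm (Y m) \<le> By"
    unfolding bounded_iff by blast
  then have "norm (X n - Y m) \<le> Bx + By" for n m
    by (meson add_mono norm_triangle_ineq4 order_trans)
  moreover obtain M where "\<And>x y. norm (x - y) \<le> Bx + By \<Longrightarrow> d x y \<le> M"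
    using ce unfolding id_coarse_equivalence_def by blast
  ultimately have d_range: "d (X n) (Y m) \<in> {0..M}" for n m
    using pseudometric_nonneg[OF pm] by auto
  have rows: "(\<lambda>m. d (X n) (Y m)) \<longlonglongrightarrow> \<tau> (q, u - of_rat q *\<^sub>R p n)" for n
    unfolding X_def Y_def translation_invariant_swap[OF ti, of "of_rat q *\<^sub>R p n"]
    using defining_sequenceD(2)[OF r rat_linear_subspace_diff_scaleR[OF D u defining_sequenceD(1)[OF p]]] .
  have cols: "(\<lambda>n. d (X n) (Y m)) \<longlonglongrightarrow> \<sigma> (q, u - of_rat q *\<^sub>R r m)" for m
    using defining_sequenceD(2)[OF p rat_linear_subspace_diff_scaleR[OF D u defining_sequenceD(1)[OF r]]]
    unfolding X_def Y_def .
  show ?thesis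
  proof (rule tendsto_Lim_of_ultrafilter_exchange[OF rows cols compact_Icc d_range V])
    fix U assume "nonprincipal_ultrafilter U"
    with stab bounded_X bounded_Y V show
      "Lim U (\<lambda>n. Lim V (\<lambda>m. d (X n) (Y m))) = Lim V (\<lambda>m. Lim U (\<lambda>n. d (X n) (Y m)))"
      unfolding stable_def by blast
  qed
qed

lemma iterated_limitin_add_defining_sequences:
  fixes d :: "'a::real_normed_vector \<Rightarrow> 'a \<Rightarrow> real"
  assumes pm: "pseudometric d" and ti: "translation_invariant d" and stab: "stable d"
    and ce: "id_coarse_equivalence d" and D: "rat_linear_subspace D"
    and p: "defining_sequence d D \<sigma> p" and r: "defining_sequence d D \<tau> r"
    and s: "defining_sequence d D \<tau> s" and V: "nonprincipal_ultrafilter V"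
  shows "\<exists>G. (\<forall>n. limitin (PT D) (\<lambda>m. xbar d D (p n + r m)) (G n) sequentially) \<and>
    limitin (PT D) G (restrict (\<lambda>(q, u). Lim V (\<lambda>m. \<sigma> (q, u - of_rat q *\<^sub>R s m))) (UNIV \<times> D))
      sequentially"
proof (intro exI conjI allI)
  let ?G = "\<lambda>n. restrict (\<lambda>(q, u). \<tau> (q, u - of_rat q *\<^sub>R p n)) (UNIV \<times> D)"
  show "limitin (PT D) (\<lambda>m. xbar d D (p n + r m)) (?G n) sequentially" for n
    by (rule limitin_add_defining_sequence[OF ti D p r])
  show "limitin (PT D) ?G (restrict (\<lambda>(q, u). Lim V (\<lambda>m. \<sigma> (q, u - of_rat q *\<^sub>R s m)))
      (UNIV \<times> D)) sequentially"
    using tendsto_shifted_defining_sequence[OF pm ti stab ce D p s _ V]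
    by (simp add: limitin_PT_iff)
qed

theorem lemma4p3:
  fixes d :: "'a::banach \<Rightarrow> 'a \<Rightarrow> real"
    and D :: "'a set"
    and \<sigma> \<tau> :: "rat \<times> 'a \<Rightarrow> real"
    and w x y z :: "nat \<Rightarrow> 'a"
  assumes separable: "\<exists>S::'a set. countable S \<and> closure S = UNIV"
    and inf_dim: "\<not> (\<exists>S::'a set. finite S \<and> span S = UNIV)"
    and pm: "pseudometric d"
    and ti: "translation_invariant d"
    and stab: "stable d"
    and ce: "id_coarse_equivalence d"
    and D_count: "countable D"
    and D_dense: "closure D = UNIV"
    and D_sub: "rat_linear_subspace D"
    and \<sigma>T: "\<sigma> \<in> Tspace d D"
    and \<tau>T: "\<tau> \<in> Tspace d D"
    and w_def: "defining_sequence d D \<sigma> w"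
    and x_def: "defining_sequence d D \<sigma> x"
    and y_def: "defining_sequence d D \<tau> y"
    and z_def: "defining_sequence d D \<tau> z"
  shows "(\<forall>\<alpha>::rat. \<exists>L.
            limitin (PT D) (\<lambda>n. xbar d D (of_rat \<alpha> *\<^sub>R w n)) L sequentially \<and>
            limitin (PT D) (\<lambda>n. xbar d D (of_rat \<alpha> *\<^sub>R x n)) L sequentially)
       \<and> (\<exists>L.
            (\<exists>G. (\<forall>n. limitin (PT D) (\<lambda>m. xbar d D (w n + y m)) (G n) sequentially)
                 \<and> limitin (PT D) G L sequentially) \<and>
            (\<exists>H. (\<forall>n. limitin (PT D) (\<lambda>m. xbar d D (x n + z m)) (H n) sequentially)
                 \<and> limitin (PT D) H L sequentially))"
proof -
  obtain V :: "nat filter" where "nonprincipal_ultrafilter V"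
    using ultrafilter_below[OF sequentially_bot] by (auto simp: nonprincipal_ultrafilter_iff)
  note iterated = iterated_limitin_add_defining_sequences[OF pm ti stab ce D_sub _ _ y_def this]
  show ?thesis
    using limitin_scaleR_defining_sequence[OF w_def] limitin_scaleR_defining_sequence[OF x_def]
      iterated[OF w_def y_def] iterated[OF x_def z_def] by blast
qed

end
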